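(* Let $E$ be an elliptic curve over $\mathbb{Q}$ and $K$ a quadratic field with $\mathrm{Gal}(K/\mathbb{Q})=\langle\tau\rangle$. Let $P\in E(K)\setminus E(\mathbb{Q})$ be such that $mP\in E(\mathbb{Q})$ for some non-zero integer $m$. If $\psi(P)=\tau(P)$ for some $\psi\in\mathrm{Aut}(E/\overline{\mathbb{Q}})$, then $P$ has finite order. *)

theory Defs
  imports Complex_Main "HOL-Computational_Algebra.Polynomial" "HOL-Computational_Algebra.Squarefree"
begin

text \<open>Projective points of a short Weierstrass curve, with coordinates in the complex
numbers (which contain the algebraic closure of Q).\<close>
datatype pt = Infty | Pt complex complex

definition elliptic_Q :: "complex \<Rightarrow> complex \<Rightarrow> bool" where
  "elliptic_Q a b \<longleftrightarrow> a \<in> \<rat> \<and> b \<in> \<rat> \<and> 4 * a ^ 3 + 27 * b ^ 2 \<noteq> 0"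

fun on_curve :: "complex \<Rightarrow> complex \<Rightarrow> pt \<Rightarrow> bool" where
  "on_curve a b Infty = True"
| "on_curve a b (Pt x y) = (y ^ 2 = x ^ 3 + a * x + b)"

fun ec_add :: "complex \<Rightarrow> pt \<Rightarrow> pt \<Rightarrow> pt" where
  "ec_add a Infty Q = Q"
| "ec_add a P Infty = P"
| "ec_add a (Pt x1 y1) (Pt x2 y2) =
     (if x1 = x2 \<and> y1 = - y2 then Infty
      else let l = (if x1 = x2 then (3 * x1 ^ 2 + a) / (2 * y1) else (y2 - y1) / (x2 - x1));
               x3 = l ^ 2 - x1 - x2
           in Pt x3 (l * (x1 - x3) - y1))"

fun ec_neg :: "pt \<Rightarrow> pt" where
  "ec_neg Infty = Infty"
| "ec_neg (Pt x y) = Pt x (- y)"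

fun ec_nmul :: "complex \<Rightarrow> nat \<Rightarrow> pt \<Rightarrow> pt" where
  "ec_nmul a 0 P = Infty"
| "ec_nmul a (Suc n) P = ec_add a P (ec_nmul a n P)"

definition ec_mul :: "complex \<Rightarrow> int \<Rightarrow> pt \<Rightarrow> pt" where
  "ec_mul a m P = (if m \<ge> 0 then ec_nmul a (nat m) P else ec_neg (ec_nmul a (nat (- m)) P))"

definition finite_order :: "complex \<Rightarrow> pt \<Rightarrow> bool" where
  "finite_order a P \<longleftrightarrow> (\<exists>n::nat. n > 0 \<and> ec_nmul a n P = Infty)"

fun pt_in :: "complex set \<Rightarrow> pt \<Rightarrow> bool" where
  "pt_in F Infty = True"
| "pt_in F (Pt x y) = (x \<in> F \<and> y \<in> F)"

definition quad_field :: "int \<Rightarrow> complex set" where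
  "quad_field d = {of_real r + of_real s * csqrt (of_int d) | r s. r \<in> \<rat> \<and> s \<in> \<rat>}"

definition quad_conj :: "int \<Rightarrow> complex \<Rightarrow> complex" where
  "quad_conj d z = (THE w. \<exists>r s. r \<in> \<rat> \<and> s \<in> \<rat> \<and>
      z = of_real r + of_real s * csqrt (of_int d) \<and> w = of_real r - of_real s * csqrt (of_int d))"

fun pt_map :: "(complex \<Rightarrow> complex) \<Rightarrow> pt \<Rightarrow> pt" where
  "pt_map f Infty = Infty"
| "pt_map f (Pt x y) = Pt (f x) (f y)"

text \<open>Automorphisms of E over Qbar: admissible changes of Weierstrass coordinates
  (x,y) \<mapsto> (u^2 x + r, u^3 y + s u^2 x + t), u \<noteq> 0, u r s t algebraic, fixing O,
  that map the curve E to itself.\<close>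
definition wsub :: "complex \<Rightarrow> complex \<Rightarrow> complex \<Rightarrow> complex \<Rightarrow> pt \<Rightarrow> pt" where
  "wsub u r s t P = (case P of Infty \<Rightarrow> Infty
      | Pt x y \<Rightarrow> Pt (u ^ 2 * x + r) (u ^ 3 * y + s * u ^ 2 * x + t))"

definition ec_aut :: "complex \<Rightarrow> complex \<Rightarrow> (pt \<Rightarrow> pt) \<Rightarrow> bool" where
  "ec_aut a b \<psi> \<longleftrightarrow> (\<exists>u r s t. u \<noteq> 0 \<and> algebraic u \<and> algebraic r \<and> algebraic s \<and> algebraic t \<and>
      \<psi> = wsub u r s t \<and>
      (\<forall>P. on_curve a b P \<longrightarrow> on_curve a b (wsub u r s t P)))"

end

theory Submission
  imports Defs
begin

text \<open>Every automorphism \<open>\<psi>\<close> of \<open>E\<close> is a scaling \<open>(x, y) \<mapsto> (u\<^sup>2 x, u\<^sup>3 y)\<close> with \<open>u\<^sup>4 a = a\<close> and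
  \<open>u\<^sup>6 b = b\<close>, and commutes with the group law; so does the conjugation \<open>\<tau>\<close> of \<open>K\<close>, which fixes
  \<open>a\<close>. For \<open>n = |m|\<close> the point \<open>Q = n P\<close> is rational, hence
  \<open>\<psi>(Q) = n \<psi>(P) = n \<tau>(P) = \<tau>(Q) = Q\<close>. As \<open>P\<close> is not rational, \<open>\<tau>(P) \<noteq> P\<close>, so \<open>u \<noteq> 1\<close>; and a
  point fixed by a nontrivial scaling is \<open>O\<close>, has \<open>y = 0\<close>, or (when \<open>u\<close> is a primitive cube root
  of unity, which forces \<open>a = 0\<close>) is \<open>(0, y)\<close>. So \<open>Q\<close> has order 1, 2 or 3, and \<open>P\<close> has finite order.

  The last step uses \<open>k (n P) = (k n) P\<close>, i.e. associativity of the chord-and-tangent law. It is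
  proved by computation: \<open>(P1 + P2) + P3\<close> is the negative of the fourth intersection of \<open>E\<close> with
  the parabola \<open>y = l x + v + \<alpha> (x - x1) (x - x2)\<close> through \<open>P1, P2, P3\<close>, and this point does not
  depend on the order of the three points.\<close>

section \<open>The chord-and-tangent law\<close>

definition ec_slope :: "complex \<Rightarrow> complex \<Rightarrow> complex \<Rightarrow> complex \<Rightarrow> complex \<Rightarrow> complex" where
  "ec_slope a x1 y1 x2 y2 =
     (if x1 = x2 then (3 * x1 ^ 2 + a) / (2 * y1) else (y2 - y1) / (x2 - x1))"

lemma ec_add_Pt:
  assumes "\<not> (x1 = x2 \<and> y1 = - y2)"
  shows "ec_add a (Pt x1 y1) (Pt x2 y2) =
    (let l = ec_slope a x1 y1 x2 y2; x3 = l ^ 2 - x1 - x2 in Pt x3 (l * (x1 - x3) - y1))"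
  using assms by (simp add: ec_slope_def Let_def)

lemma on_curve_same_x:
  fixes x y1 y2 a b :: complex
  assumes "y1 ^ 2 = x ^ 3 + a * x + b" and "y2 ^ 2 = x ^ 3 + a * x + b"
  shows "y1 = y2 \<or> y1 = - y2"
  using assms by (metis power2_eq_iff)

text \<open>The relations for \<open>l\<^sup>2\<close>, \<open>a - 2 l v\<close> and \<open>v\<^sup>2 - b\<close> are Vieta's formulas for
  \<open>x\<^sup>3 + a x + b - (l x + v)\<^sup>2 = (x - x1) (x - x2) (x - x3)\<close>.\<close>

lemma ec_add_line:
  fixes x1 x2 y1 y2 a b :: complex
  assumes c1: "y1 ^ 2 = x1 ^ 3 + a * x1 + b" and c2: "y2 ^ 2 = x2 ^ 3 + a * x2 + b"
    and ne: "\<not> (x1 = x2 \<and> y1 = - y2)"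
  obtains l v x3 y3 where "ec_add a (Pt x1 y1) (Pt x2 y2) = Pt x3 y3"
    "y1 = l * x1 + v" "y2 = l * x2 + v" "- y3 = l * x3 + v"
    "l ^ 2 = x1 + x2 + x3" "a - 2 * l * v = x1 * x2 + x1 * x3 + x2 * x3"
    "v ^ 2 - b = x1 * x2 * x3" "y3 ^ 2 = x3 ^ 3 + a * x3 + b"
proof -
  define l where "l = ec_slope a x1 y1 x2 y2"
  define v where "v = y1 - l * x1"
  define x3 where "x3 = l ^ 2 - x1 - x2"
  define y3 where "y3 = l * (x1 - x3) - y1"
  have sum: "ec_add a (Pt x1 y1) (Pt x2 y2) = Pt x3 y3"
    unfolding ec_add_Pt[OF ne] Let_def l_def[symmetric] x3_def[symmetric] y3_def[symmetric] ..
  have y1: "y1 = l * x1 + v" and y3: "- y3 = l * x3 + v"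
    by (simp_all add: v_def y3_def algebra_simps)
  have e1: "l ^ 2 = x1 + x2 + x3"
    by (simp add: x3_def)
  have y2: "y2 = l * x2 + v"
  proof (cases "x1 = x2")
    case True
    with on_curve_same_x[OF c1] c2 ne y1 show ?thesis
      by auto
  next
    case False
    then have "l * (x2 - x1) = y2 - y1"
      by (simp add: l_def ec_slope_def)
    then show ?thesis
      by (simp add: v_def algebra_simps)
  qed
  have e2: "a - 2 * l * v = x1 * x2 + x1 * x3 + x2 * x3"
  proof (cases "x1 = x2")
    case True
    with on_curve_same_x[OF c1] c2 ne have "y1 = y2"
      by auto
    with True ne have "y1 \<noteq> 0"
      by auto
    with True have "2 * l * y1 = 3 * x1 ^ 2 + a"
      by (simp add: l_def ec_slope_def)
    moreover have "l ^ 2 = x1 + x1 + x3"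
      using e1 True by simp
    ultimately have "a - 2 * l * v = x1 * x1 + x1 * x3 + x1 * x3"
      using y1 by algebra
    with True show ?thesis
      by simp
  next
    case False
    have "(x1 - x2) * (a - 2 * l * v - (x1 * x2 + x1 * x3 + x2 * x3)) = 0"
      using c1 c2 y1 y2 e1 by algebra
    with False show ?thesis
      by simp
  qed
  have "v ^ 2 - b = x1 * x2 * x3" and "y3 ^ 2 = x3 ^ 3 + a * x3 + b"
    using c1 y1 y3 e1 e2 by algebra+
  with that sum y1 y2 y3 e1 e2 show ?thesis
    by blast
qed

lemma ec_add_collinear:
  fixes x1 x2 x3 y1 y2 y3 l v a b :: complex
  assumes c1: "y1 ^ 2 = x1 ^ 3 + a * x1 + b" and c2: "y2 ^ 2 = x2 ^ 3 + a * x2 + b"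
    and y1: "y1 = l * x1 + v" and y2: "y2 = l * x2 + v" and y3: "y3 = l * x3 + v"
    and e1: "l ^ 2 = x1 + x2 + x3" and e2: "a - 2 * l * v = x1 * x2 + x1 * x3 + x2 * x3"
    and ne: "\<not> (x1 = x2 \<and> y1 = - y2)"
  shows "ec_add a (Pt x1 y1) (Pt x2 y2) = Pt x3 (- y3)"
proof -
  have "ec_slope a x1 y1 x2 y2 = l"
  proof (cases "x1 = x2")
    case True
    then have "y1 = y2" using on_curve_same_x[OF c1] c2 ne by auto
    with True ne have "y1 \<noteq> 0" by auto
    moreover have "l ^ 2 = x1 + x1 + x3" and "a - 2 * l * v = x1 * x1 + x1 * x3 + x1 * x3"
      using e1 e2 True by simp_all
    then have "2 * l * y1 = 3 * x1 ^ 2 + a"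
      using y1 by algebra
    ultimately show ?thesis
      using True by (simp add: ec_slope_def field_simps)
  next
    case False
    moreover have "y2 - y1 = l * (x2 - x1)"
      using y1 y2 by (simp add: algebra_simps)
    ultimately show ?thesis
      by (simp add: ec_slope_def)
  qed
  then show ?thesis
    unfolding ec_add_Pt[OF ne] Let_def using e1 y1 y3 by (simp add: algebra_simps)
qed

lemma ec_add_Infty_right [simp]: "ec_add a P Infty = P"
  by (cases P) auto

lemma ec_neg_neg [simp]: "ec_neg (ec_neg P) = P"
  by (cases P) auto

lemma on_curve_ec_neg [simp]: "on_curve a b (ec_neg P) = on_curve a b P"
  by (cases P) auto

lemma ec_add_neg_right: "ec_add a P (ec_neg P) = Infty"
  by (cases P) auto

lemma ec_add_neg_left: "ec_add a (ec_neg P) P = Infty"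
  by (cases P) auto

lemma on_curve_ec_add:
  assumes "on_curve a b P" and "on_curve a b Q"
  shows "on_curve a b (ec_add a P Q)"
proof (cases P; cases Q)
  fix x1 y1 x2 y2
  assume P: "P = Pt x1 y1" and Q: "Q = Pt x2 y2"
  show ?thesis
  proof (cases "x1 = x2 \<and> y1 = - y2")
    case False
    have "y1 ^ 2 = x1 ^ 3 + a * x1 + b" and "y2 ^ 2 = x2 ^ 3 + a * x2 + b"
      using assms P Q by auto
    from ec_add_line[OF this False] show ?thesis
      unfolding P Q by (metis on_curve.simps(2))
  qed (use P Q in auto)
qed (use assms in auto)

lemma ec_add_commute:
  assumes "on_curve a b P" and "on_curve a b Q"
  shows "ec_add a P Q = ec_add a Q P"
proof (cases P; cases Q)
  fix x1 y1 x2 y2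
  assume P: "P = Pt x1 y1" and Q: "Q = Pt x2 y2"
  show ?thesis
  proof (cases "x1 = x2 \<and> y1 = - y2")
    case False
    have c1: "y1 ^ 2 = x1 ^ 3 + a * x1 + b" and c2: "y2 ^ 2 = x2 ^ 3 + a * x2 + b"
      using assms P Q by auto
    obtain l v x3 y3 where h: "ec_add a (Pt x1 y1) (Pt x2 y2) = Pt x3 y3"
      "y1 = l * x1 + v" "y2 = l * x2 + v" "- y3 = l * x3 + v"
      "l ^ 2 = x1 + x2 + x3" "a - 2 * l * v = x1 * x2 + x1 * x3 + x2 * x3"
      using ec_add_line[OF c1 c2 False] by metis
    have "ec_add a (Pt x2 y2) (Pt x1 y1) = Pt x3 (- (- y3))"
      by (rule ec_add_collinear[OF c2 c1 h(3,2,4)])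
        (use h(5,6) False in \<open>auto simp: algebra_simps\<close>)
    with h(1) show ?thesis
      unfolding P Q by simp
  qed (use P Q in auto)
qed auto

lemma ec_neg_add:
  assumes "on_curve a b P" and "on_curve a b Q"
  shows "ec_neg (ec_add a P Q) = ec_add a (ec_neg P) (ec_neg Q)"
proof (cases P; cases Q)
  fix x1 y1 x2 y2
  assume P: "P = Pt x1 y1" and Q: "Q = Pt x2 y2"
  show ?thesis
  proof (cases "x1 = x2 \<and> y1 = - y2")
    case False
    have c1: "(- y1) ^ 2 = x1 ^ 3 + a * x1 + b" and c2: "(- y2) ^ 2 = x2 ^ 3 + a * x2 + b"
      using assms P Q by auto
    obtain l v x3 y3 where h: "ec_add a (Pt x1 y1) (Pt x2 y2) = Pt x3 y3"
      "y1 = l * x1 + v" "y2 = l * x2 + v" "- y3 = l * x3 + v"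
      "l ^ 2 = x1 + x2 + x3" "a - 2 * l * v = x1 * x2 + x1 * x3 + x2 * x3"
      using ec_add_line[OF c1[simplified] c2[simplified] False] by metis
    have "y3 = - l * x3 + - v"
      using h(4) by algebra
    then have "ec_add a (Pt x1 (- y1)) (Pt x2 (- y2)) = Pt x3 (- y3)"
      by (intro ec_add_collinear[OF c1 c2, where l = "- l" and v = "- v"])
        (use h(2,3,5,6) False in \<open>auto simp: algebra_simps\<close>)
    with h(1) show ?thesis
      unfolding P Q by simp
  qed (use P Q in auto)
qed auto

lemma cubic_no_double_root:
  fixes a b x :: complex
  assumes "4 * a ^ 3 + 27 * b ^ 2 \<noteq> 0" and "3 * x ^ 2 + a = 0"
  shows "x ^ 3 + a * x + b \<noteq> 0"
proof
  assume "x ^ 3 + a * x + b = 0"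
  with assms(2) have "a = - 3 * x ^ 2" and "b = 2 * x ^ 3"
    by algebra+
  with assms(1) show False
    by algebra
qed

lemma ec_add_neg_cancel:
  assumes "on_curve a b P" and "on_curve a b Q" and disc: "4 * a ^ 3 + 27 * b ^ 2 \<noteq> 0"
  shows "ec_add a (ec_add a P Q) (ec_neg Q) = P"
proof (cases P; cases Q)
  fix x1 y1 x2 y2
  assume P: "P = Pt x1 y1" and Q: "Q = Pt x2 y2"
  show ?thesis
  proof (cases "x1 = x2 \<and> y1 = - y2")
    case False
    have c1: "y1 ^ 2 = x1 ^ 3 + a * x1 + b" and c2: "(- y2) ^ 2 = x2 ^ 3 + a * x2 + b"
      using assms P Q by auto
    obtain l v x3 y3 where h: "ec_add a (Pt x1 y1) (Pt x2 y2) = Pt x3 y3"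
      "y1 = l * x1 + v" "y2 = l * x2 + v" "- y3 = l * x3 + v"
      "l ^ 2 = x1 + x2 + x3" "a - 2 * l * v = x1 * x2 + x1 * x3 + x2 * x3"
      "y3 ^ 2 = x3 ^ 3 + a * x3 + b"
      using ec_add_line[OF c1 c2[simplified] False] by metis
    have ne: "\<not> (x3 = x2 \<and> y3 = - (- y2))"
    proof
      assume "x3 = x2 \<and> y3 = - (- y2)"
      \<comment> \<open>the chord through \<open>P\<close> and \<open>Q\<close> would be tangent to the curve at \<open>Q\<close>, where \<open>y = 0\<close>\<close>
      with h(3,4) have y2: "y2 = 0" and v: "v = - l * x2" and "3 * x2 ^ 2 + a = 0"
        using h(5,6) by algebra+
      with c2 cubic_no_double_root[OF disc] show False
        by simp
    qed
    have "y3 = - l * x3 + - v"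
      using h(4) by algebra
    then have "ec_add a (Pt x3 y3) (Pt x2 (- y2)) = Pt x1 (- (- y1))"
      by (intro ec_add_collinear[OF h(7) c2, where l = "- l" and v = "- v"])
        (use h(2,3,5,6) ne in \<open>auto simp: algebra_simps\<close>)
    with h(1) show ?thesis
      unfolding P Q by simp
  qed (use P Q in auto)
qed (auto simp: ec_add_neg_right)

lemma ec_neg_add_cancel_left:
  assumes "on_curve a b P" and "on_curve a b Q" and "4 * a ^ 3 + 27 * b ^ 2 \<noteq> 0"
  shows "ec_add a (ec_neg Q) (ec_add a Q P) = P"
proof -
  have "ec_add a (ec_neg Q) (ec_add a Q P) = ec_add a (ec_add a P Q) (ec_neg Q)"
    using assms by (metis ec_add_commute on_curve_ec_add on_curve_ec_neg)
  also have "\<dots> = P"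
    using assms by (rule ec_add_neg_cancel)
  finally show ?thesis .
qed

lemma ec_add_right_eq_self:
  assumes "on_curve a b P" and "on_curve a b Q" and "4 * a ^ 3 + 27 * b ^ 2 \<noteq> 0"
    and "ec_add a P Q = P"
  shows "Q = Infty"
proof -
  have "Q = ec_add a (ec_add a Q P) (ec_neg P)"
    using ec_add_neg_cancel[OF assms(2,1,3)] by simp
  also have "\<dots> = Infty"
    using ec_add_commute[OF assms(1,2)] assms(4) by (simp add: ec_add_neg_right)
  finally show ?thesis .
qed

section \<open>Associativity\<close>

text \<open>On the curve, \<open>(y - l x - v) (y + l x + v) = (x - x1) (x - x2) (x - xD)\<close>; hence a point
  of the curve on the parabola \<open>y = l x + v + \<alpha> (x - x1) (x - x2)\<close> also lies on the line
  \<open>\<alpha> (y + l x + v) = x - xD\<close> through \<open>D = (xD, yD)\<close>.\<close>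

lemma ec_add_on_parabola:
  fixes x1 x2 x3 x4 xD y3 y4 yD l v \<alpha> a b :: complex
  assumes cD: "yD ^ 2 = xD ^ 3 + a * xD + b" and c3: "y3 ^ 2 = x3 ^ 3 + a * x3 + b"
    and e1: "l ^ 2 = x1 + x2 + xD" and e2: "a - 2 * l * v = x1 * x2 + x1 * xD + x2 * xD"
    and yD: "- yD = l * xD + v" and \<alpha>: "\<alpha> \<noteq> 0"
    and y3: "y3 = l * x3 + v + \<alpha> * (x3 - x1) * (x3 - x2)"
    and q3: "- (x3 - xD) + 2 * \<alpha> * (l * x3 + v) + \<alpha> ^ 2 * (x3 - x1) * (x3 - x2) = 0"
    and ne: "\<not> (xD = x3 \<and> yD = - y3)"
    and x4: "x4 = (1 - 2 * \<alpha> * l) / \<alpha> ^ 2 + x1 + x2 - x3"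
    and y4: "y4 = l * x4 + v + \<alpha> * (x4 - x1) * (x4 - x2)"
  shows "ec_add a (Pt xD yD) (Pt x3 y3) = Pt x4 (- y4)"
proof -
  define \<beta> where "\<beta> = 1 / \<alpha>"
  have \<beta>: "\<alpha> * \<beta> = 1"
    using \<alpha> by (simp add: \<beta>_def)
  have x4': "\<alpha> ^ 2 * x4 = 1 - 2 * \<alpha> * l + \<alpha> ^ 2 * (x1 + x2 - x3)"
    using x4 \<alpha> by (simp add: field_simps)
  have "\<alpha> ^ 2 * (- (x4 - xD) + 2 * \<alpha> * (l * x4 + v) + \<alpha> ^ 2 * (x4 - x1) * (x4 - x2)) = 0"
    using x4' q3 by algebra
  with \<alpha> have q4: "- (x4 - xD) + 2 * \<alpha> * (l * x4 + v) + \<alpha> ^ 2 * (x4 - x1) * (x4 - x2) = 0"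
    by simp
  show ?thesis
  proof (rule ec_add_collinear[OF cD c3, where l = "\<beta> - l" and v = "- xD * \<beta> - v"])
    show "yD = (\<beta> - l) * xD + (- xD * \<beta> - v)"
      using yD by algebra
    show "y3 = (\<beta> - l) * x3 + (- xD * \<beta> - v)"
      using y3 q3 \<beta> by algebra
    show "y4 = (\<beta> - l) * x4 + (- xD * \<beta> - v)"
      using y4 q4 \<beta> by algebra
    show "(\<beta> - l) ^ 2 = xD + x3 + x4"
      using x4' \<beta> e1 by algebra
    show "a - 2 * (\<beta> - l) * (- xD * \<beta> - v) = xD * x3 + xD * x4 + x3 * x4"
      using x4' \<beta> e2 q3 by algebra
  qed (rule ne)
qed

lemma ec_add_add_parabola:
  fixes x1 x2 x3 y1 y2 y3 a b :: complex
  assumes c1: "y1 ^ 2 = x1 ^ 3 + a * x1 + b" and c2: "y2 ^ 2 = x2 ^ 3 + a * x2 + b"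
    and c3: "y3 ^ 2 = x3 ^ 3 + a * x3 + b"
    and ne12: "\<not> (x1 = x2 \<and> y1 = - y2)" and x31: "x3 \<noteq> x1" and x32: "x3 \<noteq> x2"
    and ne3: "ec_add a (Pt x1 y1) (Pt x2 y2) \<noteq> Pt x3 (- y3)"
  obtains l v \<alpha> x4 where "y1 = l * x1 + v" and "y2 = l * x2 + v"
    and "y3 = l * x3 + v + \<alpha> * (x3 - x1) * (x3 - x2)" and "\<alpha> \<noteq> 0"
    and "a - 2 * l * v = x1 * x2 + (x1 + x2) * (l ^ 2 - x1 - x2)"
    and "x4 = (1 - 2 * \<alpha> * l) / \<alpha> ^ 2 + x1 + x2 - x3"
    and "ec_add a (ec_add a (Pt x1 y1) (Pt x2 y2)) (Pt x3 y3) =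
      Pt x4 (- (l * x4 + v + \<alpha> * (x4 - x1) * (x4 - x2)))"
proof -
  obtain l v xD yD where h: "ec_add a (Pt x1 y1) (Pt x2 y2) = Pt xD yD"
    "y1 = l * x1 + v" "y2 = l * x2 + v" "- yD = l * xD + v" "l ^ 2 = x1 + x2 + xD"
    "a - 2 * l * v = x1 * x2 + x1 * xD + x2 * xD" "v ^ 2 - b = x1 * x2 * xD"
    "yD ^ 2 = xD ^ 3 + a * xD + b"
    using ec_add_line[OF c1 c2 ne12] by metis
  have ne: "\<not> (xD = x3 \<and> yD = - y3)"
    using ne3 h(1) by auto
  have R: "(x3 - x1) * (x3 - x2) \<noteq> 0"
    using x31 x32 by simp
  define \<alpha> where "\<alpha> = (y3 - (l * x3 + v)) / ((x3 - x1) * (x3 - x2))"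
  have y3: "y3 = l * x3 + v + \<alpha> * (x3 - x1) * (x3 - x2)"
    using R by (simp add: \<alpha>_def)
  have "y3 ^ 2 - (l * x3 + v) ^ 2 = (x3 - x1) * (x3 - x2) * (x3 - xD)"
    using c3 h(5-7) by algebra
  then have "(x3 - x1) * (x3 - x2) *
      (- (x3 - xD) + 2 * \<alpha> * (l * x3 + v) + \<alpha> ^ 2 * (x3 - x1) * (x3 - x2)) = 0"
    using y3 by algebra
  with R have q3: "- (x3 - xD) + 2 * \<alpha> * (l * x3 + v) + \<alpha> ^ 2 * (x3 - x1) * (x3 - x2) = 0"
    by simp
  have \<alpha>: "\<alpha> \<noteq> 0"
  proof
    assume "\<alpha> = 0"
    with q3 have "xD = x3"
      by simp
    moreover from \<open>\<alpha> = 0\<close> y3 h(4) this have "yD = - y3"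
      by algebra
    ultimately show False
      using ne by simp
  qed
  define x4 where "x4 = (1 - 2 * \<alpha> * l) / \<alpha> ^ 2 + x1 + x2 - x3"
  have "ec_add a (ec_add a (Pt x1 y1) (Pt x2 y2)) (Pt x3 y3) =
      Pt x4 (- (l * x4 + v + \<alpha> * (x4 - x1) * (x4 - x2)))"
    unfolding h(1) by (rule ec_add_on_parabola[OF h(8) c3 h(5,6,4) \<alpha> y3 q3 ne x4_def refl])
  moreover have "a - 2 * l * v = x1 * x2 + (x1 + x2) * (l ^ 2 - x1 - x2)"
    using h(5,6) by algebra
  ultimately show ?thesis
    using that[OF h(2,3) y3 \<alpha> _ x4_def] by blast
qed

lemma quadratic_three_roots_eq_0:
  fixes c0 c1 c2 x1 x2 x3 :: "'a::idom"
  assumes "c2 * x1 ^ 2 + c1 * x1 + c0 = 0" and "c2 * x2 ^ 2 + c1 * x2 + c0 = 0"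
    and "c2 * x3 ^ 2 + c1 * x3 + c0 = 0"
    and "x1 \<noteq> x2" and "x2 \<noteq> x3" and "x1 \<noteq> x3"
  shows "c2 = 0 \<and> c1 = 0 \<and> c0 = 0"
proof -
  have "(x1 - x2) * (c2 * (x1 + x2) + c1) = 0" and "(x2 - x3) * (c2 * (x2 + x3) + c1) = 0"
    using assms(1-3) by algebra+
  with assms(4,5) have "c2 * (x1 + x2) + c1 = 0" and "c2 * (x2 + x3) + c1 = 0"
    by simp_all
  then have "c2 * (x1 - x3) = 0"
    by algebra
  with assms show ?thesis
    by (metis add_0 mult_zero_left mult_eq_0_iff right_minus_eq \<open>c2 * (x1 + x2) + c1 = 0\<close>)
qed

text \<open>The parabola through three points with distinct abscissae is unique, so \<open>(P1 + P2) + P3\<close>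
  and \<open>(P2 + P3) + P1\<close> are both the negative of its fourth intersection with the curve.\<close>

lemma ec_assoc_distinct_x:
  fixes x1 x2 x3 y1 y2 y3 a b :: complex
  assumes c1: "y1 ^ 2 = x1 ^ 3 + a * x1 + b" and c2: "y2 ^ 2 = x2 ^ 3 + a * x2 + b"
    and c3: "y3 ^ 2 = x3 ^ 3 + a * x3 + b"
    and x12: "x1 \<noteq> x2" and x23: "x2 \<noteq> x3" and x13: "x1 \<noteq> x3"
    and ne3: "ec_add a (Pt x1 y1) (Pt x2 y2) \<noteq> Pt x3 (- y3)"
    and ne1: "ec_add a (Pt x2 y2) (Pt x3 y3) \<noteq> Pt x1 (- y1)"
  shows "ec_add a (ec_add a (Pt x1 y1) (Pt x2 y2)) (Pt x3 y3) =
    ec_add a (ec_add a (Pt x2 y2) (Pt x3 y3)) (Pt x1 y1)"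
proof -
  obtain l v \<alpha> x4 where L: "y1 = l * x1 + v" "y2 = l * x2 + v"
      "y3 = l * x3 + v + \<alpha> * (x3 - x1) * (x3 - x2)" "\<alpha> \<noteq> 0"
    and x4: "x4 = (1 - 2 * \<alpha> * l) / \<alpha> ^ 2 + x1 + x2 - x3"
    and sum: "ec_add a (ec_add a (Pt x1 y1) (Pt x2 y2)) (Pt x3 y3) =
      Pt x4 (- (l * x4 + v + \<alpha> * (x4 - x1) * (x4 - x2)))"
    using ec_add_add_parabola[OF c1 c2 c3 _ _ _ ne3] x12 x13 x23 by metis
  obtain l' v' \<alpha>' x4' where L': "y2 = l' * x2 + v'" "y3 = l' * x3 + v'"
      "y1 = l' * x1 + v' + \<alpha>' * (x1 - x2) * (x1 - x3)"
    and x4': "x4' = (1 - 2 * \<alpha>' * l') / \<alpha>' ^ 2 + x2 + x3 - x1"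
    and sum': "ec_add a (ec_add a (Pt x2 y2) (Pt x3 y3)) (Pt x1 y1) =
      Pt x4' (- (l' * x4' + v' + \<alpha>' * (x4' - x2) * (x4' - x3)))"
    using ec_add_add_parabola[OF c2 c3 c1 _ _ _ ne1] x12 x13 x23 by metis
  define c2 where "c2 = \<alpha> - \<alpha>'"
  define c1 where "c1 = (l - \<alpha> * (x1 + x2)) - (l' - \<alpha>' * (x2 + x3))"
  define c0 where "c0 = (v + \<alpha> * x1 * x2) - (v' + \<alpha>' * x2 * x3)"
  have "c2 * x1 ^ 2 + c1 * x1 + c0 = 0"
    unfolding c2_def c1_def c0_def using L(1) L'(3) by algebra
  moreover have "c2 * x2 ^ 2 + c1 * x2 + c0 = 0"
    unfolding c2_def c1_def c0_def using L(2) L'(1) by algebra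
  moreover have "c2 * x3 ^ 2 + c1 * x3 + c0 = 0"
    unfolding c2_def c1_def c0_def using L(3) L'(2) by algebra
  ultimately have "c2 = 0 \<and> c1 = 0 \<and> c0 = 0"
    using quadratic_three_roots_eq_0 x12 x23 x13 by blast
  then have \<alpha>': "\<alpha>' = \<alpha>" and l': "l' = l - \<alpha> * (x1 + x2) + \<alpha> * (x2 + x3)"
    and v': "v' = v + \<alpha> * x1 * x2 - \<alpha> * x2 * x3"
    unfolding c2_def c1_def c0_def by (auto simp: algebra_simps)
  have "x4' = x4"
    unfolding x4 x4' \<alpha>' l' using L(4) by (simp add: field_simps) algebra
  moreover have "l' * x4 + v' + \<alpha>' * (x4 - x2) * (x4 - x3) = l * x4 + v + \<alpha> * (x4 - x1) * (x4 - x2)"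
    unfolding \<alpha>' l' v' by algebra
  ultimately show ?thesis
    unfolding sum sum' by simp
qed

lemma ec_assoc_double:
  fixes x1 x3 y1 y3 a b :: complex
  assumes disc: "4 * a ^ 3 + 27 * b ^ 2 \<noteq> 0"
    and c1: "y1 ^ 2 = x1 ^ 3 + a * x1 + b" and c3: "y3 ^ 2 = x3 ^ 3 + a * x3 + b"
    and y1: "y1 \<noteq> 0" and x13: "x3 \<noteq> x1"
    and ne3: "ec_add a (Pt x1 y1) (Pt x1 y1) \<noteq> Pt x3 (- y3)"
    and ne1: "ec_add a (Pt x1 y1) (Pt x3 y3) \<noteq> Pt x1 (- y1)"
  shows "ec_add a (ec_add a (Pt x1 y1) (Pt x1 y1)) (Pt x3 y3) =
    ec_add a (ec_add a (Pt x1 y1) (Pt x3 y3)) (Pt x1 y1)"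
proof -
  have ne11: "\<not> (x1 = x1 \<and> y1 = - y1)"
    using y1 by simp
  obtain l v \<alpha> x4 where L: "y1 = l * x1 + v" "y3 = l * x3 + v + \<alpha> * (x3 - x1) * (x3 - x1)"
      "\<alpha> \<noteq> 0" "a - 2 * l * v = x1 * x1 + (x1 + x1) * (l ^ 2 - x1 - x1)"
    and x4: "x4 = (1 - 2 * \<alpha> * l) / \<alpha> ^ 2 + x1 + x1 - x3"
    and sum: "ec_add a (ec_add a (Pt x1 y1) (Pt x1 y1)) (Pt x3 y3) =
      Pt x4 (- (l * x4 + v + \<alpha> * (x4 - x1) * (x4 - x1)))"
    using ec_add_add_parabola[OF c1 c1 c3 ne11 x13 x13 ne3] by metis
  have tangent: "2 * l * y1 = 3 * x1 ^ 2 + a"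
    using L(1,4) by algebra
  have ne13: "\<not> (x1 = x3 \<and> y1 = - y3)"
    using x13 by auto
  obtain l' v' xE yE where h: "ec_add a (Pt x1 y1) (Pt x3 y3) = Pt xE yE"
    "y1 = l' * x1 + v'" "y3 = l' * x3 + v'" "- yE = l' * xE + v'" "l' ^ 2 = x1 + x3 + xE"
    "a - 2 * l' * v' = x1 * x3 + x1 * xE + x3 * xE" "yE ^ 2 = xE ^ 3 + a * xE + b"
    using ec_add_line[OF c1 c3 ne13] by metis
  have ne: "\<not> (xE = x1 \<and> yE = - y1)"
    using ne1 h(1) by auto
  have xE: "xE \<noteq> x1"
  proof
    assume "xE = x1"
    with ne have "ec_add a (Pt x1 y1) (Pt x3 y3) = Pt x1 y1"
      using on_curve_same_x[OF h(7)] c1 h(1) by auto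
    moreover have "on_curve a b (Pt x1 y1)" and "on_curve a b (Pt x3 y3)"
      using c1 c3 by simp_all
    ultimately show False
      using ec_add_right_eq_self[OF _ _ disc] by blast
  qed
  \<comment> \<open>the parabola tangent at \<open>P1\<close> through \<open>P3\<close> is also \<open>y = l' x + v' + \<alpha> (x - x1) (x - x3)\<close>\<close>
  have l': "l' = l + \<alpha> * (x3 - x1)"
  proof -
    have "(x3 - x1) * (\<alpha> * (x3 - x1) - (l' - l)) = 0"
      using L(1,2) h(2,3) by algebra
    with x13 show ?thesis
      by simp
  qed
  have v': "v' = v - \<alpha> * (x3 - x1) * x1"
    using l' L(1) h(2) by algebra
  have "(x3 - x1) * (x3 - x1) * (2 * y1 * \<alpha> - (x1 - xE)) = 0"
    using l' tangent h(2,3,5) c1 c3 L(1) by algebra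
  with x13 have \<alpha>E: "2 * y1 * \<alpha> = x1 - xE"
    by simp
  define x4' where "x4' = (1 - 2 * \<alpha> * l') / \<alpha> ^ 2 + x1 + x3 - x1"
  have "ec_add a (Pt xE yE) (Pt x1 y1) = Pt x4' (- (l' * x4' + v' + \<alpha> * (x4' - x1) * (x4' - x3)))"
  proof (rule ec_add_on_parabola[OF h(7) c1 _ _ h(4) L(3) _ _ ne x4'_def refl])
    show "l' ^ 2 = x1 + x3 + xE" and "a - 2 * l' * v' = x1 * x3 + x1 * xE + x3 * xE"
      using h(5,6) by simp_all
    show "y1 = l' * x1 + v' + \<alpha> * (x1 - x1) * (x1 - x3)"
      using h(2) by simp
    show "- (x1 - xE) + 2 * \<alpha> * (l' * x1 + v') + \<alpha> ^ 2 * (x1 - x1) * (x1 - x3) = 0"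
      using \<alpha>E h(2) by (simp add: algebra_simps)
  qed
  moreover have "x4' = x4"
    unfolding x4'_def x4 l' using L(3) by (simp add: field_simps) algebra
  moreover have "l' * x4 + v' + \<alpha> * (x4 - x1) * (x4 - x3) = l * x4 + v + \<alpha> * (x4 - x1) * (x4 - x1)"
    unfolding l' v' by algebra
  ultimately show ?thesis
    unfolding sum h(1) by simp
qed

lemma on_curve_Pt_same_x:
  assumes "on_curve a b (Pt x y1)" and "on_curve a b (Pt x y2)"
  shows "Pt x y2 = Pt x y1 \<or> Pt x y2 = ec_neg (Pt x y1)"
  using on_curve_same_x assms by fastforce

lemma ec_assoc_affine:
  assumes disc: "4 * a ^ 3 + 27 * b ^ 2 \<noteq> 0"
    and oX: "on_curve a b X" and oY: "on_curve a b Y" and oZ: "on_curve a b Z"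
    and X: "X = Pt x1 y1" and Y: "Y = Pt x2 y2" and Z: "Z = Pt x3 y3"
    and nYX: "Y \<noteq> ec_neg X" and nZY: "Z \<noteq> ec_neg Y"
    and nXYZ: "ec_add a X Y \<noteq> ec_neg Z" and nYZX: "ec_add a Y Z \<noteq> ec_neg X"
  shows "ec_add a (ec_add a X Y) Z = ec_add a X (ec_add a Y Z)"
proof -
  note comm = ec_add_commute[of a b]
  have c1: "y1 ^ 2 = x1 ^ 3 + a * x1 + b" and c2: "y2 ^ 2 = x2 ^ 3 + a * x2 + b"
    and c3: "y3 ^ 2 = x3 ^ 3 + a * x3 + b"
    using oX oY oZ X Y Z by simp_all
  consider (x12) "x1 = x2" | (x23) "x1 \<noteq> x2" "x2 = x3" | (x13) "x1 \<noteq> x2" "x2 \<noteq> x3" "x1 = x3"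
    | (distinct) "x1 \<noteq> x2" "x2 \<noteq> x3" "x1 \<noteq> x3"
    by blast
  then show ?thesis
  proof cases
    case x12
    with nYX have YX: "Y = X"
      using on_curve_Pt_same_x[of a b x1 y1 y2] oX oY X Y by auto
    with nYX X have y1: "y1 \<noteq> 0"
      by auto
    show ?thesis
    proof (cases "x3 = x1")
      case True
      with nZY YX have "Z = X"
        using on_curve_Pt_same_x[of a b x1 y1 y3] oX oZ X Z by auto
      then show ?thesis
        using YX comm[OF on_curve_ec_add[OF oX oX] oX] by simp
    next
      case False
      have "ec_add a (ec_add a X X) Z = ec_add a (ec_add a X Z) X"
        using ec_assoc_double[OF disc c1 c3 y1 False] nXYZ nYZX YX X Z by simp
      then show ?thesis
        using YX comm[OF on_curve_ec_add[OF oX oZ] oX] by simp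
    qed
  next
    case x23
    with nZY have ZY: "Z = Y"
      using on_curve_Pt_same_x[of a b x2 y2 y3] oY oZ Y Z by auto
    with nZY Y have y2: "y2 \<noteq> 0"
      by auto
    have "ec_add a (ec_add a Y Y) X = ec_add a (ec_add a Y X) Y"
      using ec_assoc_double[OF disc c2 c1 y2 x23(1)] nXYZ nYZX comm[OF oX oY] ZY X Y by simp
    then show ?thesis
      using ZY comm[OF oX oY] comm[OF on_curve_ec_add[OF oY oY] oX] by simp
  next
    case x13
    then have "Z = X \<or> Z = ec_neg X"
      using on_curve_Pt_same_x[of a b x1 y1 y3] oX oZ X Z by auto
    then show ?thesis
    proof
      assume "Z = X"
      then show ?thesis
        using comm[OF oX oY] comm[OF on_curve_ec_add[OF oX oY] oX] by simp
    next
      assume ZX: "Z = ec_neg X"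
      have "ec_add a (ec_add a X Y) Z = Y"
        using ZX comm[OF oX oY] ec_add_neg_cancel[OF oY oX disc] by simp
      moreover have "ec_add a X (ec_add a Y Z) = Y"
        using ZX comm[OF on_curve_ec_add[OF oY oZ] oX] ec_add_neg_cancel[OF oY oZ disc] by simp
      ultimately show ?thesis
        by simp
    qed
  next
    case distinct
    have "ec_add a (ec_add a X Y) Z = ec_add a (ec_add a Y Z) X"
      using ec_assoc_distinct_x[OF c1 c2 c3 distinct] nXYZ nYZX X Y Z by simp
    then show ?thesis
      using comm[OF on_curve_ec_add[OF oY oZ] oX] by simp
  qed
qed

lemma ec_add_assoc:
  assumes disc: "4 * a ^ 3 + 27 * b ^ 2 \<noteq> 0"
    and oX: "on_curve a b X" and oY: "on_curve a b Y" and oZ: "on_curve a b Z"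
  shows "ec_add a (ec_add a X Y) Z = ec_add a X (ec_add a Y Z)"
proof -
  note comm = ec_add_commute[of a b]
  have nX: "on_curve a b (ec_neg X)" and nY: "on_curve a b (ec_neg Y)"
    and nZ: "on_curve a b (ec_neg Z)"
    using oX oY oZ by simp_all
  consider (YX) "Y = ec_neg X" | (ZY) "Z = ec_neg Y" | (XYZ) "ec_add a X Y = ec_neg Z"
    | (YZX) "ec_add a Y Z = ec_neg X" | (Infty) "X = Infty \<or> Y = Infty \<or> Z = Infty"
    | (affine) x1 y1 x2 y2 x3 y3 where "X = Pt x1 y1" "Y = Pt x2 y2" "Z = Pt x3 y3"
      "Y \<noteq> ec_neg X" "Z \<noteq> ec_neg Y" "ec_add a X Y \<noteq> ec_neg Z" "ec_add a Y Z \<noteq> ec_neg X"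
    by (metis pt.exhaust)
  then show ?thesis
  proof cases
    case YX
    then show ?thesis
      using ec_neg_add_cancel_left[OF oZ oY disc] by (simp add: ec_add_neg_right)
  next
    case ZY
    then show ?thesis
      using ec_add_neg_cancel[OF oX oY disc] by (simp add: ec_add_neg_right)
  next
    case XYZ
    then have "Z = ec_add a (ec_neg Y) (ec_neg X)"
      using ec_neg_add[OF oX oY] comm[OF nX nY] by (metis ec_neg_neg)
    then have "ec_add a Y Z = ec_neg X"
      using ec_neg_add_cancel_left[OF nX nY disc] by simp
    with XYZ show ?thesis
      by (simp add: ec_add_neg_left ec_add_neg_right)
  next
    case YZX
    then have "X = ec_add a (ec_neg Z) (ec_neg Y)"
      using ec_neg_add[OF oY oZ] comm[OF nY nZ] by (metis ec_neg_neg)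
    then have "ec_add a X Y = ec_add a Y (ec_add a (ec_neg Y) (ec_neg Z))"
      using comm[OF nZ nY] comm[OF on_curve_ec_add[OF nY nZ] oY] by simp
    then have "ec_add a X Y = ec_neg Z"
      using ec_neg_add_cancel_left[OF nZ nY disc] by simp
    with YZX show ?thesis
      by (simp add: ec_add_neg_left ec_add_neg_right)
  next
    case Infty
    then show ?thesis
      by auto
  next
    case affine
    then show ?thesis
      by (rule ec_assoc_affine[OF disc oX oY oZ])
  qed
qed

section \<open>Multiples of a point\<close>

lemma on_curve_ec_nmul: "on_curve a b P \<Longrightarrow> on_curve a b (ec_nmul a n P)"
  by (induction n) (auto intro: on_curve_ec_add)

lemma ec_nmul_add:
  assumes "on_curve a b P" and "4 * a ^ 3 + 27 * b ^ 2 \<noteq> 0"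
  shows "ec_nmul a (i + j) P = ec_add a (ec_nmul a i P) (ec_nmul a j P)"
proof (induction i)
  case (Suc i)
  then show ?case
    using ec_add_assoc[OF assms(2,1) on_curve_ec_nmul on_curve_ec_nmul] assms(1) by simp
qed simp

lemma ec_nmul_mult:
  assumes "on_curve a b P" and "4 * a ^ 3 + 27 * b ^ 2 \<noteq> 0"
  shows "ec_nmul a (i * j) P = ec_nmul a i (ec_nmul a j P)"
  by (induction i) (simp_all add: ec_nmul_add[OF assms])

lemma finite_orderI: "n > 0 \<Longrightarrow> ec_nmul a n P = Infty \<Longrightarrow> finite_order a P"
  by (auto simp: finite_order_def)

lemma finite_order_of_multiple:
  assumes "on_curve a b P" and "4 * a ^ 3 + 27 * b ^ 2 \<noteq> 0"
    and "n > 0" and "finite_order a (ec_nmul a n P)"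
  shows "finite_order a P"
proof -
  obtain k where "k > 0" and "ec_nmul a k (ec_nmul a n P) = Infty"
    using assms(4) by (auto simp: finite_order_def)
  with assms(3) ec_nmul_mult[OF assms(1,2)] show ?thesis
    by (intro finite_orderI[of "k * n"]) simp_all
qed

section \<open>Automorphisms of the curve\<close>

lemma wsub_scaling [simp]:
  "wsub u 0 0 0 Infty = Infty" "wsub u 0 0 0 (Pt x y) = Pt (u ^ 2 * x) (u ^ 3 * y)"
  by (simp_all add: wsub_def)

lemma ec_slope_scaling:
  assumes "u \<noteq> 0" and "u ^ 4 * a = a"
  shows "ec_slope a (u ^ 2 * x1) (u ^ 3 * y1) (u ^ 2 * x2) (u ^ 3 * y2) = u * ec_slope a x1 y1 x2 y2"
proof (cases "x1 = x2")
  case True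
  have "(3 * (u ^ 2 * x1) ^ 2 + a) / (2 * (u ^ 3 * y1)) = u ^ 4 * (3 * x1 ^ 2 + a) / (2 * (u ^ 3 * y1))"
    using assms(2) by (simp add: algebra_simps power_mult_distrib)
  also have "\<dots> = u * ((3 * x1 ^ 2 + a) / (2 * y1))"
    using assms(1) by (cases "y1 = 0") (simp_all add: field_simps power3_eq_cube power4_eq_xxxx)
  finally show ?thesis
    using True assms(1) by (simp add: ec_slope_def)
next
  case False
  with assms(1) show ?thesis
    by (simp add: ec_slope_def field_simps power3_eq_cube power2_eq_square)
qed

lemma wsub_scaling_ec_add:
  assumes "u \<noteq> 0" and "u ^ 4 * a = a"
  shows "wsub u 0 0 0 (ec_add a P Q) = ec_add a (wsub u 0 0 0 P) (wsub u 0 0 0 Q)"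
proof (cases P; cases Q)
  fix x1 y1 x2 y2
  assume P: "P = Pt x1 y1" and Q: "Q = Pt x2 y2"
  show ?thesis
  proof (cases "x1 = x2 \<and> y1 = - y2")
    case False
    with assms(1) have F: "\<not> (u ^ 2 * x1 = u ^ 2 * x2 \<and> u ^ 3 * y1 = - (u ^ 3 * y2))"
      by (simp flip: mult_minus_right)
    show ?thesis
      unfolding P Q ec_add_Pt[OF False] ec_add_Pt[OF F] Let_def wsub_scaling
        ec_slope_scaling[OF assms]
      by (simp add: algebra_simps power2_eq_square power3_eq_cube)
  qed (simp add: P Q)
qed simp_all

lemma wsub_scaling_ec_nmul:
  assumes "u \<noteq> 0" and "u ^ 4 * a = a"
  shows "wsub u 0 0 0 (ec_nmul a n P) = ec_nmul a n (wsub u 0 0 0 P)"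
  by (induction n) (simp_all add: wsub_scaling_ec_add[OF assms])

lemma linear_eq_0_off_finite:
  fixes s t :: complex
  assumes "finite A" and "\<And>x. x \<notin> A \<Longrightarrow> s * x + t = 0"
  shows "s = 0 \<and> t = 0"
proof -
  obtain x0 where x0: "x0 \<notin> A"
    using ex_new_if_finite[OF infinite_UNIV_char_0 assms(1)] by blast
  obtain x1 where x1: "x1 \<notin> insert x0 A"
    using ex_new_if_finite[OF infinite_UNIV_char_0] assms(1) by (metis finite_insert)
  have "s * x0 + t = 0" and "s * x1 + t = 0"
    using assms(2) x0 x1 by auto
  then have "s * (x0 - x1) = 0"
    by algebra
  with x1 have "s = 0"
    by auto
  with \<open>s * x0 + t = 0\<close> show ?thesis
    by simp
qed

lemma finite_cubic_roots: "finite {x :: complex. x ^ 3 + a * x + b = 0}"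
proof -
  have "{x :: complex. x ^ 3 + a * x + b = 0} = {x. poly [:b, a, 0, 1:] x = 0}"
    by (simp add: algebra_simps power3_eq_cube)
  show ?thesis
    unfolding \<open>_ = _\<close> by (rule poly_roots_finite) simp
qed

text \<open>The images of \<open>(x, y)\<close> and \<open>(x, - y)\<close> both lie on the curve.\<close>

lemma wsub_on_curve_imp_shear_0:
  assumes "u \<noteq> 0" and curve: "\<forall>P. on_curve a b P \<longrightarrow> on_curve a b (wsub u r s t P)"
  shows "s = 0 \<and> t = 0"
proof -
  have image: "(u ^ 3 * y + s * u ^ 2 * x + t) ^ 2 = (u ^ 2 * x + r) ^ 3 + a * (u ^ 2 * x + r) + b"
    if "y ^ 2 = x ^ 3 + a * x + b" for x y
    using curve[rule_format, of "Pt x y"] that by (simp add: wsub_def)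
  have "s * u ^ 2 = 0 \<and> t = 0"
  proof (rule linear_eq_0_off_finite[OF finite_cubic_roots])
    fix x
    assume x: "x \<notin> {x. x ^ 3 + a * x + b = 0}"
    define y where "y = csqrt (x ^ 3 + a * x + b)"
    have y: "y ^ 2 = x ^ 3 + a * x + b" and "(- y) ^ 2 = x ^ 3 + a * x + b"
      by (simp_all add: y_def)
    from image[OF this(1)] image[OF this(2)] have "4 * u ^ 3 * y * (s * u ^ 2 * x + t) = 0"
      by algebra
    with assms(1) x y show "s * u ^ 2 * x + t = 0"
      by auto
  qed
  with assms(1) show ?thesis
    by simp
qed

text \<open>Without shear the curve condition is an identity between cubics in \<open>x\<close>; evaluating it at
  \<open>x = 0, \<plusminus>1\<close> gives \<open>r = 0\<close>, \<open>u\<^sup>4 a = a\<close> and \<open>u\<^sup>6 b = b\<close>.\<close>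

lemma ec_aut_scaling:
  assumes "ec_aut a b \<psi>"
  obtains u where "u \<noteq> 0" and "u ^ 4 * a = a" and "u ^ 6 * b = b" and "\<psi> = wsub u 0 0 0"
proof -
  obtain u r s t where u: "u \<noteq> 0" and \<psi>: "\<psi> = wsub u r s t"
    and curve: "\<forall>P. on_curve a b P \<longrightarrow> on_curve a b (wsub u r s t P)"
    using assms unfolding ec_aut_def by blast
  with wsub_on_curve_imp_shear_0 have s: "s = 0" and t: "t = 0"
    by blast+
  have cubic: "u ^ 6 * (x ^ 3 + a * x + b) = (u ^ 2 * x + r) ^ 3 + a * (u ^ 2 * x + r) + b" for x
  proof -
    let ?y = "csqrt (x ^ 3 + a * x + b)"
    have "on_curve a b (wsub u r s t (Pt x ?y))"
      using curve by simp
    then have "(u ^ 3 * ?y) ^ 2 = (u ^ 2 * x + r) ^ 3 + a * (u ^ 2 * x + r) + b"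
      by (simp add: wsub_def s t)
    then show ?thesis
      by (simp add: power_mult_distrib power_mult[symmetric])
  qed
  have e0: "u ^ 6 * b = r ^ 3 + a * r + b"
    using cubic[of 0] by simp
  have e1: "u ^ 6 * (1 + a + b) = (u ^ 2 + r) ^ 3 + a * (u ^ 2 + r) + b"
    using cubic[of 1] by simp
  have e2: "u ^ 6 * (- 1 - a + b) = (r - u ^ 2) ^ 3 + a * (r - u ^ 2) + b"
    using cubic[of "- 1"] by (simp add: algebra_simps)
  have "6 * u ^ 4 * r = 0"
    using e0 e1 e2 by algebra
  with u have r: "r = 0"
    by simp
  have "u ^ 2 * (u ^ 4 * a - a) = 0"
    using e1 e2 r by algebra
  with u have "u ^ 4 * a = a"
    by simp
  moreover have "u ^ 6 * b = b"
    using e0 r by simp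
  ultimately show ?thesis
    using that u \<psi> r s t by blast
qed

lemma scaling_fixed_point_finite_order:
  assumes "u \<noteq> 1" and "u ^ 4 * a = a" and "wsub u 0 0 0 Q = Q"
  shows "finite_order a Q"
proof (cases Q)
  case Infty
  then show ?thesis
    by (intro finite_orderI[of 1]) simp_all
next
  case (Pt x y)
  with assms(3) have x: "u ^ 2 * x = x" and y: "u ^ 3 * y = y"
    by simp_all
  show ?thesis
  proof (cases "y = 0")
    case True
    with Pt have "ec_nmul a 2 Q = Infty"
      by (simp add: numeral_2_eq_2)
    then show ?thesis
      by (intro finite_orderI[of 2]) simp_all
  next
    case False
    \<comment> \<open>then \<open>u\<close> is a primitive cube root of unity, and \<open>Q = (0, y)\<close> is a flex of \<open>y\<^sup>2 = x\<^sup>3 + b\<close>\<close>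
    with y have u3: "u ^ 3 = 1"
      by simp
    have x0: "x = 0"
    proof (rule ccontr)
      assume "x \<noteq> 0"
      with x have "u ^ 2 = 1"
        by simp
      with u3 assms(1) show False
        by algebra
    qed
    have "u ^ 4 = u"
      using u3 by algebra
    with assms(2) have "(u - 1) * a = 0"
      by (simp add: algebra_simps)
    with assms(1) have a0: "a = 0"
      by simp
    have "ec_nmul a 3 Q = Infty"
      using Pt x0 a0 False by (simp add: numeral_3_eq_3 Let_def)
    then show ?thesis
      by (intro finite_orderI[of 3]) simp_all
  qed
qed

section \<open>The quadratic field and its conjugation\<close>

lemma Rats_square_neq_squarefree:
  fixes q :: real and d :: int
  assumes "squarefree d" and "d \<noteq> 1" and "q \<in> \<rat>"
  shows "q ^ 2 \<noteq> of_int d"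
proof
  assume q2: "q ^ 2 = of_int d"
  obtain i j :: int where "j > 0" and "coprime i j" and q: "q = of_int i / of_int j"
    using Rats_cases'[OF assms(3)] by blast
  from q2 q \<open>j > 0\<close> have "(of_int i) ^ 2 = (of_int (d * j ^ 2) :: real)"
    by (simp add: field_simps)
  then have ij: "i ^ 2 = d * j ^ 2"
    by (metis of_int_eq_iff of_int_power)
  have "is_unit (j ^ 2)"
    using \<open>coprime i j\<close> ij by (metis coprime_common_divisor coprime_power_left_iff
      coprime_power_right_iff dvd_refl dvd_triv_right)
  with ij have "d = i ^ 2"
    by (simp add: is_unit_power_iff)
  then have "i ^ 2 dvd d"
    by simp
  with assms(1) have "is_unit i"
    by (rule squarefreeD)
  then have "i ^ 2 = 1"
    by (metis power2_abs power_one zdvd1_eq)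
  with \<open>d = i ^ 2\<close> assms(2) show False
    by simp
qed

locale quadratic_field =
  fixes d :: int
  assumes squarefree: "squarefree d" and not_one: "d \<noteq> 1"
begin

abbreviation K :: "complex set" where "K \<equiv> quad_field d"

abbreviation \<tau> :: "complex \<Rightarrow> complex" where "\<tau> \<equiv> quad_conj d"

abbreviation sqrt_d :: complex where "sqrt_d \<equiv> csqrt (of_int d)"

lemma quad_coords_unique:
  assumes "r \<in> \<rat>" "s \<in> \<rat>" "r' \<in> \<rat>" "s' \<in> \<rat>"
    and eq: "of_real r + of_real s * sqrt_d = of_real r' + of_real s' * sqrt_d"
  shows "r = r' \<and> s = s'"
proof (cases "s = s'")
  case False
  from eq have "of_real (s - s') * sqrt_d = of_real (r' - r)"
    by (simp add: algebra_simps)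
  with False have "sqrt_d = of_real ((r' - r) / (s - s'))"
    by (simp add: field_simps)
  then have "of_real (((r' - r) / (s - s')) ^ 2) = (of_real (of_int d) :: complex)"
    by (metis of_real_power of_real_of_int_eq power2_csqrt)
  then have "((r' - r) / (s - s')) ^ 2 = of_int d"
    using of_real_eq_iff by blast
  with Rats_square_neq_squarefree[OF squarefree not_one] assms(1-4) show ?thesis
    by simp
qed (use eq in simp)

lemma quad_fieldI: "r \<in> \<rat> \<Longrightarrow> s \<in> \<rat> \<Longrightarrow> z = of_real r + of_real s * sqrt_d \<Longrightarrow> z \<in> K"
  unfolding quad_field_def by blast

lemma quad_fieldE:
  assumes "z \<in> K"
  obtains r s where "r \<in> \<rat>" "s \<in> \<rat>" "z = of_real r + of_real s * sqrt_d"
  using assms unfolding quad_field_def by blast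

lemma quad_conj_eq:
  assumes "r \<in> \<rat>" "s \<in> \<rat>" "z = of_real r + of_real s * sqrt_d"
  shows "\<tau> z = of_real r - of_real s * sqrt_d"
  unfolding quad_conj_def
proof (rule the_equality)
  fix w
  assume "\<exists>r' s'. r' \<in> \<rat> \<and> s' \<in> \<rat> \<and> z = of_real r' + of_real s' * sqrt_d \<and>
      w = of_real r' - of_real s' * sqrt_d"
  with assms quad_coords_unique show "w = of_real r - of_real s * sqrt_d"
    by metis
qed (use assms in blast)

lemma quad_Rats [simp]:
  assumes "q \<in> \<rat>"
  shows "q \<in> K" and "\<tau> q = q"
proof -
  obtain i j :: int where "q = of_int i / of_int j"
    using Rats_cases'[OF assms] by metis
  then have r: "of_int i / of_int j \<in> \<rat>" and q: "q = of_real (of_int i / of_int j) + of_real 0 * sqrt_d"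
    by simp_all
  show "q \<in> K"
    by (rule quad_fieldI[OF r _ q]) simp
  show "\<tau> q = q"
    using quad_conj_eq[OF r _ q] q by simp
qed

lemma quad_add [simp]:
  assumes "z \<in> K" and "w \<in> K"
  shows "z + w \<in> K" and "\<tau> (z + w) = \<tau> z + \<tau> w"
proof -
  obtain r s r' s' where rs: "r \<in> \<rat>" "s \<in> \<rat>" "z = of_real r + of_real s * sqrt_d"
    and rs': "r' \<in> \<rat>" "s' \<in> \<rat>" "w = of_real r' + of_real s' * sqrt_d"
    using assms by (metis quad_fieldE)
  have zw: "z + w = of_real (r + r') + of_real (s + s') * sqrt_d"
    using rs(3) rs'(3) by (simp add: algebra_simps)
  show "z + w \<in> K"
    using rs rs' by (intro quad_fieldI[OF _ _ zw]) simp_all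
  have "\<tau> (z + w) = of_real (r + r') - of_real (s + s') * sqrt_d"
    using rs rs' by (intro quad_conj_eq[OF _ _ zw]) simp_all
  also have "\<dots> = \<tau> z + \<tau> w"
    unfolding quad_conj_eq[OF rs] quad_conj_eq[OF rs'] by (simp add: algebra_simps)
  finally show "\<tau> (z + w) = \<tau> z + \<tau> w" .
qed

lemma quad_minus [simp]:
  assumes "z \<in> K"
  shows "- z \<in> K" and "\<tau> (- z) = - \<tau> z"
proof -
  obtain r s where rs: "r \<in> \<rat>" "s \<in> \<rat>" "z = of_real r + of_real s * sqrt_d"
    using assms by (metis quad_fieldE)
  have mz: "- z = of_real (- r) + of_real (- s) * sqrt_d"
    using rs(3) by simp
  show "- z \<in> K"
    using rs by (intro quad_fieldI[OF _ _ mz]) simp_all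
  show "\<tau> (- z) = - \<tau> z"
    using quad_conj_eq[OF _ _ mz] quad_conj_eq[OF rs] rs(1,2) by simp
qed

lemma quad_diff [simp]:
  assumes "z \<in> K" and "w \<in> K"
  shows "z - w \<in> K" and "\<tau> (z - w) = \<tau> z - \<tau> w"
  using quad_add[OF assms(1) quad_minus(1)[OF assms(2)]] quad_minus[OF assms(2)] by simp_all

lemma quad_mult [simp]:
  assumes "z \<in> K" and "w \<in> K"
  shows "z * w \<in> K" and "\<tau> (z * w) = \<tau> z * \<tau> w"
proof -
  obtain r s r' s' where rs: "r \<in> \<rat>" "s \<in> \<rat>" "z = of_real r + of_real s * sqrt_d"
    and rs': "r' \<in> \<rat>" "s' \<in> \<rat>" "w = of_real r' + of_real s' * sqrt_d"
    using assms by (metis quad_fieldE)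
  have d: "sqrt_d ^ 2 = of_real (of_int d)"
    by simp
  have zw: "z * w = of_real (r * r' + s * s' * of_int d) + of_real (r * s' + s * r') * sqrt_d"
  proof -
    have "z * w = of_real r * of_real r' + of_real s * of_real s' * sqrt_d ^ 2
        + (of_real r * of_real s' + of_real s * of_real r') * sqrt_d"
      unfolding rs(3) rs'(3) by algebra
    then show ?thesis
      unfolding d by simp
  qed
  have "\<tau> z * \<tau> w = of_real r * of_real r' + of_real s * of_real s' * sqrt_d ^ 2
      - (of_real r * of_real s' + of_real s * of_real r') * sqrt_d"
    unfolding quad_conj_eq[OF rs] quad_conj_eq[OF rs'] by algebra
  then have "\<tau> z * \<tau> w = of_real (r * r' + s * s' * of_int d) - of_real (r * s' + s * r') * sqrt_d"
    unfolding d by simp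
  moreover have "r * r' + s * s' * of_int d \<in> \<rat>" and "r * s' + s * r' \<in> \<rat>"
    using rs rs' by simp_all
  ultimately show "z * w \<in> K" and "\<tau> (z * w) = \<tau> z * \<tau> w"
    using quad_fieldI[OF _ _ zw] quad_conj_eq[OF _ _ zw] by simp_all
qed

lemma quad_norm:
  assumes "r \<in> \<rat>" "s \<in> \<rat>" "z = of_real r + of_real s * sqrt_d"
  shows "z * \<tau> z = of_real (r ^ 2 - s ^ 2 * of_int d)"
    and "z \<noteq> 0 \<Longrightarrow> r ^ 2 - s ^ 2 * of_int d \<noteq> 0"
proof -
  have "z * \<tau> z = (of_real r + of_real s * sqrt_d) * (of_real r - of_real s * sqrt_d)"
    unfolding quad_conj_eq[OF assms] using assms(3) by simp
  also have "\<dots> = of_real r ^ 2 - of_real s ^ 2 * sqrt_d ^ 2"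
    by algebra
  finally show "z * \<tau> z = of_real (r ^ 2 - s ^ 2 * of_int d)"
    by simp
  assume "z \<noteq> 0"
  show "r ^ 2 - s ^ 2 * of_int d \<noteq> 0"
  proof (cases "s = 0")
    case True
    with \<open>z \<noteq> 0\<close> assms(3) show ?thesis
      by simp
  next
    case False
    with Rats_square_neq_squarefree[OF squarefree not_one, of "r / s"] assms(1,2) show ?thesis
      by (simp add: field_simps)
  qed
qed

lemma quad_inverse [simp]:
  assumes "z \<in> K"
  shows "inverse z \<in> K" and "\<tau> (inverse z) = inverse (\<tau> z)"
proof -
  obtain r s where rs: "r \<in> \<rat>" "s \<in> \<rat>" "z = of_real r + of_real s * sqrt_d"
    using assms by (metis quad_fieldE)
  define N where "N = r ^ 2 - s ^ 2 * of_int d"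
  have "inverse z \<in> K \<and> \<tau> (inverse z) = inverse (\<tau> z)"
  proof (cases "z = 0")
    case False
    have norm: "z * \<tau> z = of_real N" and N: "N \<noteq> 0"
      using quad_norm[OF rs] False by (simp_all add: N_def)
    with False have \<tau>z: "\<tau> z \<noteq> 0"
      by auto
    have inv: "inverse z = of_real (r / N) + of_real (- s / N) * sqrt_d"
      using norm N False unfolding quad_conj_eq[OF rs] by (simp add: field_simps)
    have "inverse (\<tau> z) = of_real (r / N) - of_real (- s / N) * sqrt_d"
      using norm N \<tau>z unfolding rs(3) by (simp add: field_simps)
    moreover have "r / N \<in> \<rat>" and "- s / N \<in> \<rat>"
      using rs by (simp_all add: N_def)
    ultimately show ?thesis
      using quad_fieldI[OF _ _ inv] quad_conj_eq[OF _ _ inv] by simp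
  qed simp
  then show "inverse z \<in> K" and "\<tau> (inverse z) = inverse (\<tau> z)"
    by simp_all
qed

lemma quad_divide [simp]:
  assumes "z \<in> K" and "w \<in> K"
  shows "z / w \<in> K" and "\<tau> (z / w) = \<tau> z / \<tau> w"
  using quad_mult[OF assms(1) quad_inverse(1)[OF assms(2)]] quad_inverse[OF assms(2)]
  by (simp_all add: divide_inverse)

lemma quad_power [simp]:
  assumes "z \<in> K"
  shows "z ^ n \<in> K" and "\<tau> (z ^ n) = \<tau> z ^ n"
  by (induction n) (simp_all add: assms)

lemma quad_conj_fixed_Rats:
  assumes "z \<in> K" and "\<tau> z = z"
  shows "z \<in> \<rat>"
proof -
  obtain r s where rs: "r \<in> \<rat>" "s \<in> \<rat>" "z = of_real r + of_real s * sqrt_d"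
    using assms by (metis quad_fieldE)
  with assms(2) have "of_real r + of_real (- s) * sqrt_d = of_real r + of_real s * sqrt_d"
    using quad_conj_eq[OF rs] by simp
  with rs have "s = 0"
    using quad_coords_unique[of r "- s" r s] by simp
  with rs show ?thesis
    by simp
qed

lemma quad_conj_involution [simp]:
  assumes "z \<in> K"
  shows "\<tau> z \<in> K" and "\<tau> (\<tau> z) = z"
proof -
  obtain r s where rs: "r \<in> \<rat>" "s \<in> \<rat>" "z = of_real r + of_real s * sqrt_d"
    using assms by (metis quad_fieldE)
  have \<tau>z: "\<tau> z = of_real r + of_real (- s) * sqrt_d"
    using quad_conj_eq[OF rs] by simp
  show "\<tau> z \<in> K"
    using rs by (intro quad_fieldI[OF _ _ \<tau>z]) simp_all
  show "\<tau> (\<tau> z) = z"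
    using quad_conj_eq[OF _ _ \<tau>z] rs by simp
qed

lemma quad_conj_inj:
  assumes "z \<in> K" and "w \<in> K"
  shows "\<tau> z = \<tau> w \<longleftrightarrow> z = w"
  using assms by (metis quad_conj_involution(2))

lemma quad_ec_slope:
  assumes "x1 \<in> K" "y1 \<in> K" "x2 \<in> K" "y2 \<in> K" and "a \<in> \<rat>"
  shows "ec_slope a x1 y1 x2 y2 \<in> K"
    and "\<tau> (ec_slope a x1 y1 x2 y2) = ec_slope a (\<tau> x1) (\<tau> y1) (\<tau> x2) (\<tau> y2)"
  using assms by (simp_all add: ec_slope_def quad_conj_inj)

lemma quad_ec_add:
  assumes "pt_in K P" and "pt_in K Q" and "a \<in> \<rat>"
  shows "pt_in K (ec_add a P Q) \<and> pt_map \<tau> (ec_add a P Q) = ec_add a (pt_map \<tau> P) (pt_map \<tau> Q)"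
proof (cases P; cases Q)
  fix x1 y1 x2 y2
  assume P: "P = Pt x1 y1" and Q: "Q = Pt x2 y2"
  with assms have K: "x1 \<in> K" "y1 \<in> K" "x2 \<in> K" "y2 \<in> K"
    by simp_all
  show ?thesis
  proof (cases "x1 = x2 \<and> y1 = - y2")
    case True
    with P Q K show ?thesis
      by simp
  next
    case False
    with K have F: "\<not> (\<tau> x1 = \<tau> x2 \<and> \<tau> y1 = - \<tau> y2)"
      by (simp add: quad_conj_inj flip: quad_minus(2))
    show ?thesis
      unfolding P Q pt_map.simps ec_add_Pt[OF False] ec_add_Pt[OF F] Let_def
      using K assms(3) by (simp add: quad_ec_slope)
  qed
qed (use assms in auto)

lemma quad_ec_nmul:
  assumes "pt_in K P" and "a \<in> \<rat>"
  shows "pt_in K (ec_nmul a n P) \<and> pt_map \<tau> (ec_nmul a n P) = ec_nmul a n (pt_map \<tau> P)"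
  by (induction n) (simp_all add: quad_ec_add assms)

lemma pt_in_Rats_quad: "pt_in \<rat> P \<Longrightarrow> pt_in K P"
  by (cases P) simp_all

lemma pt_in_Rats_iff_conj_fixed:
  assumes "pt_in K P"
  shows "pt_in \<rat> P \<longleftrightarrow> pt_map \<tau> P = P"
  using assms by (cases P) (auto intro: quad_conj_fixed_Rats)

end

lemma pt_in_Rats_ec_neg [simp]: "pt_in \<rat> (ec_neg P) \<longleftrightarrow> pt_in \<rat> P"
  by (cases P) simp_all

theorem lemma5p1:
  fixes a b :: complex and d m :: int and P :: pt and \<psi> :: "pt \<Rightarrow> pt"
  assumes "elliptic_Q a b"
    and "squarefree d" and "d \<noteq> 1"
    and "on_curve a b P" and "pt_in (quad_field d) P" and "\<not> pt_in \<rat> P"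
    and "m \<noteq> 0" and "pt_in \<rat> (ec_mul a m P)"
    and "ec_aut a b \<psi>"
    and "\<psi> P = pt_map (quad_conj d) P"
  shows "finite_order a P"
proof -
  interpret quadratic_field d
    using assms(2,3) by unfold_locales
  have a: "a \<in> \<rat>" and disc: "4 * a ^ 3 + 27 * b ^ 2 \<noteq> 0"
    using assms(1) unfolding elliptic_Q_def by auto
  obtain u where u: "u \<noteq> 0" "u ^ 4 * a = a" and \<psi>: "\<psi> = wsub u 0 0 0"
    using ec_aut_scaling[OF assms(9)] by metis
  define n where "n = nat \<bar>m\<bar>"
  have n: "n > 0"
    using assms(7) by (simp add: n_def)
  have Q: "pt_in \<rat> (ec_nmul a n P)"
    using assms(8) by (cases "m \<ge> 0") (simp_all add: ec_mul_def n_def)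
  have "wsub u 0 0 0 (ec_nmul a n P) = ec_nmul a n (pt_map \<tau> P)"
    using wsub_scaling_ec_nmul[OF u] assms(10) \<psi> by simp
  also have "\<dots> = ec_nmul a n P"
    using quad_ec_nmul[OF assms(5) a] pt_in_Rats_iff_conj_fixed pt_in_Rats_quad[OF Q] Q by simp
  finally have fixed: "wsub u 0 0 0 (ec_nmul a n P) = ec_nmul a n P" .
  have "u \<noteq> 1"
  proof
    assume "u = 1"
    with \<psi> assms(10) have "pt_map \<tau> P = P"
      by (cases P) simp_all
    with assms(5,6) show False
      using pt_in_Rats_iff_conj_fixed by blast
  qed
  with u(2) fixed have "finite_order a (ec_nmul a n P)"
    by (intro scaling_fixed_point_finite_order)
  with assms(4) disc n show ?thesis
    by (rule finite_order_of_multiple)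
qed

end
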